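(* Let $\lambda$ be a cardinal, let $M\prec\mathcal{C}$ be $\lambda$-saturated, let $A$ be a set with $P^M\subseteq A\subseteq M$, and let $p(\bar x)$ be a partial type over $A$ with $|p|<\lambda$, where $\bar x$ is a (possibly infinite) tuple of fewer than $\lambda$ variables. Then there is $p^*(\bar x)\in S_*(A)$ extending $p$.
   Context: Standing assumptions: $T$ is a complete first-order theory in a vocabulary with no function symbols, $P$ a unary predicate, $\mathcal{C}$ a monster model of $T$; all models are elementary submodels of $\mathcal{C}$ and all sets are subsets of $\mathcal{C}$. $P^A=A\cap P^{\mathcal{C}}$. Assumed throughout: $P$ is stably embedded (subsets of $P^{\mathcal{C}}$ definable with parameters in $\mathcal{C}$ are definable in $\mathcal{C}|_P$ with parameters from $P^{\mathcal{C}}$), $0$-definable subsets of $P^{\mathcal{C}}$ are $0$-definable in $\mathcal{C}|_P$, and $T$ has quantifier elimination. A set $A$ is complete if for every formula $\psi(\bar x,\bar y)$ and $\bar b\subseteq A$, $\models(\exists\bar x\in P)\psi(\bar x,\bar b)$ implies $\models\psi(\bar a,\bar b)$ for some $\bar a\subseteq P\cap A$. For complete $A$, $S_*(A)=\{\mathrm{tp}(\bar c/A): P\cap(A\cup\bar c)=P\cap A\text{ and }A\cup\bar c\text{ is complete}\}$. *)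

theory Defs
  imports Main
begin

text \<open>Terms: a vocabulary without function symbols (hence without constants), so terms are
  variables or parameters (elements of the monster model, whose universe is the type 'm).\<close>
datatype ('v,'m) tm = Var 'v | Par 'm

datatype ('r,'v,'m) fm =
    TT
  | Eq "('v,'m) tm" "('v,'m) tm"
  | Rel 'r "('v,'m) tm list"
  | Neg "('r,'v,'m) fm"
  | Conj "('r,'v,'m) fm" "('r,'v,'m) fm"
  | Ex 'v "('r,'v,'m) fm"

fun tm_vars :: "('v,'m) tm \<Rightarrow> 'v set" where
  "tm_vars (Var v) = {v}" | "tm_vars (Par a) = {}"

fun tm_pars :: "('v,'m) tm \<Rightarrow> 'm set" where
  "tm_pars (Var v) = {}" | "tm_pars (Par a) = {a}"

fun fv :: "('r,'v,'m) fm \<Rightarrow> 'v set" where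
  "fv TT = {}"
| "fv (Eq s t) = tm_vars s \<union> tm_vars t"
| "fv (Rel r ts) = (\<Union>t\<in>set ts. tm_vars t)"
| "fv (Neg \<phi>) = fv \<phi>"
| "fv (Conj \<phi> \<psi>) = fv \<phi> \<union> fv \<psi>"
| "fv (Ex v \<phi>) = fv \<phi> - {v}"

fun pars :: "('r,'v,'m) fm \<Rightarrow> 'm set" where
  "pars TT = {}"
| "pars (Eq s t) = tm_pars s \<union> tm_pars t"
| "pars (Rel r ts) = (\<Union>t\<in>set ts. tm_pars t)"
| "pars (Neg \<phi>) = pars \<phi>"
| "pars (Conj \<phi> \<psi>) = pars \<phi> \<union> pars \<psi>"
| "pars (Ex v \<phi>) = pars \<phi>"

fun wf :: "('r \<Rightarrow> nat) \<Rightarrow> ('r,'v,'m) fm \<Rightarrow> bool" where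
  "wf ar TT = True"
| "wf ar (Eq s t) = True"
| "wf ar (Rel r ts) = (length ts = ar r)"
| "wf ar (Neg \<phi>) = wf ar \<phi>"
| "wf ar (Conj \<phi> \<psi>) = (wf ar \<phi> \<and> wf ar \<psi>)"
| "wf ar (Ex v \<phi>) = wf ar \<phi>"

fun qfree :: "('r,'v,'m) fm \<Rightarrow> bool" where
  "qfree TT = True"
| "qfree (Eq s t) = True"
| "qfree (Rel r ts) = True"
| "qfree (Neg \<phi>) = qfree \<phi>"
| "qfree (Conj \<phi> \<psi>) = (qfree \<phi> \<and> qfree \<psi>)"
| "qfree (Ex v \<phi>) = False"

fun ev :: "('v \<Rightarrow> 'm) \<Rightarrow> ('v,'m) tm \<Rightarrow> 'm" where
  "ev e (Var v) = e v" | "ev e (Par a) = a"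

text \<open>Satisfaction in the substructure with domain D of the structure with interpretation I
  (the monster model has domain UNIV).  Quantifiers range over D.\<close>
fun sat :: "'m set \<Rightarrow> ('r \<Rightarrow> 'm list \<Rightarrow> bool) \<Rightarrow> ('v \<Rightarrow> 'm) \<Rightarrow> ('r,'v,'m) fm \<Rightarrow> bool" where
  "sat D I e TT = True"
| "sat D I e (Eq s t) = (ev e s = ev e t)"
| "sat D I e (Rel r ts) = I r (map (ev e) ts)"
| "sat D I e (Neg \<phi>) = (\<not> sat D I e \<phi>)"
| "sat D I e (Conj \<phi> \<psi>) = (sat D I e \<phi> \<and> sat D I e \<psi>)"
| "sat D I e (Ex v \<phi>) = (\<exists>a\<in>D. sat D I (e(v := a)) \<phi>)"

definition Pset :: "('r \<Rightarrow> 'm list \<Rightarrow> bool) \<Rightarrow> 'r \<Rightarrow> 'm set" where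
  "Pset I P = {a. I P [a]}"

definition elem_sub :: "('r \<Rightarrow> nat) \<Rightarrow> ('r \<Rightarrow> 'm list \<Rightarrow> bool) \<Rightarrow> 'v itself \<Rightarrow> 'm set \<Rightarrow> bool" where
  "elem_sub ar I _ M \<longleftrightarrow> M \<noteq> {} \<and>
     (\<forall>(\<phi>::('r,'v,'m) fm) e. wf ar \<phi> \<longrightarrow> pars \<phi> \<subseteq> M \<longrightarrow> e ` fv \<phi> \<subseteq> M \<longrightarrow>
        (sat M I e \<phi> \<longleftrightarrow> sat UNIV I e \<phi>))"

definition saturated :: "('r \<Rightarrow> nat) \<Rightarrow> ('r \<Rightarrow> 'm list \<Rightarrow> bool) \<Rightarrow> 'v itself \<Rightarrow> 'l rel \<Rightarrow> 'm set \<Rightarrow> bool" where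
  "saturated ar I _ lam M \<longleftrightarrow>
     (\<forall>B (q::('r,'v,'m) fm set) v. B \<subseteq> M \<longrightarrow> (card_of B, lam) \<in> ordLess \<longrightarrow>
        (\<forall>\<phi>\<in>q. wf ar \<phi> \<and> pars \<phi> \<subseteq> B \<and> fv \<phi> \<subseteq> {v}) \<longrightarrow>
        (\<forall>F. finite F \<longrightarrow> F \<subseteq> q \<longrightarrow> (\<exists>a\<in>M. \<forall>\<phi>\<in>F. sat M I (\<lambda>_. a) \<phi>)) \<longrightarrow>
        (\<exists>a\<in>M. \<forall>\<phi>\<in>q. sat M I (\<lambda>_. a) \<phi>))"

definition partial_elementary :: "('r \<Rightarrow> nat) \<Rightarrow> ('r \<Rightarrow> 'm list \<Rightarrow> bool) \<Rightarrow> 'v itself \<Rightarrow> 'm set \<Rightarrow> ('m \<Rightarrow> 'm) \<Rightarrow> bool" where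
  "partial_elementary ar I _ D f \<longleftrightarrow>
     (\<forall>(\<phi>::('r,'v,'m) fm) e. wf ar \<phi> \<longrightarrow> pars \<phi> = {} \<longrightarrow> e ` fv \<phi> \<subseteq> D \<longrightarrow>
        (sat UNIV I e \<phi> \<longleftrightarrow> sat UNIV I (f \<circ> e) \<phi>))"

definition automorphism :: "('r \<Rightarrow> nat) \<Rightarrow> ('r \<Rightarrow> 'm list \<Rightarrow> bool) \<Rightarrow> ('m \<Rightarrow> 'm) \<Rightarrow> bool" where
  "automorphism ar I g \<longleftrightarrow> bij g \<and> (\<forall>r xs. length xs = ar r \<longrightarrow> (I r xs \<longleftrightarrow> I r (map g xs)))"

definition strongly_homogeneous :: "('r \<Rightarrow> nat) \<Rightarrow> ('r \<Rightarrow> 'm list \<Rightarrow> bool) \<Rightarrow> 'v itself \<Rightarrow> 'k rel \<Rightarrow> bool" where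
  "strongly_homogeneous ar I V \<kappa> \<longleftrightarrow>
     (\<forall>D f. (card_of D, \<kappa>) \<in> ordLess \<longrightarrow> partial_elementary ar I V D f \<longrightarrow>
        (\<exists>g. automorphism ar I g \<and> (\<forall>x\<in>D. g x = f x)))"

text \<open>The monster model C (domain UNIV :: 'm set): kappa-saturated and strongly
  kappa-homogeneous for a (large) infinite cardinal kappa; "small" means of size less than kappa.\<close>
definition monster :: "('r \<Rightarrow> nat) \<Rightarrow> ('r \<Rightarrow> 'm list \<Rightarrow> bool) \<Rightarrow> 'v itself \<Rightarrow> 'k rel \<Rightarrow> bool" where
  "monster ar I V \<kappa> \<longleftrightarrow> Card_order \<kappa> \<and> \<not> finite (Field \<kappa>) \<and>
     saturated ar I V \<kappa> (UNIV :: 'm set) \<and> strongly_homogeneous ar I V \<kappa>"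

definition stably_embedded :: "('r \<Rightarrow> nat) \<Rightarrow> ('r \<Rightarrow> 'm list \<Rightarrow> bool) \<Rightarrow> 'v itself \<Rightarrow> 'r \<Rightarrow> bool" where
  "stably_embedded ar I _ P \<longleftrightarrow>
     (\<forall>(\<phi>::('r,'v,'m) fm) X. wf ar \<phi> \<longrightarrow> finite X \<longrightarrow> fv \<phi> \<subseteq> X \<longrightarrow>
        (\<exists>\<chi>::('r,'v,'m) fm. wf ar \<chi> \<and> pars \<chi> \<subseteq> Pset I P \<and> fv \<chi> \<subseteq> X \<and>
           (\<forall>e. e ` X \<subseteq> Pset I P \<longrightarrow> (sat UNIV I e \<phi> \<longleftrightarrow> sat (Pset I P) I e \<chi>))))"

definition zero_definable_in_P :: "('r \<Rightarrow> nat) \<Rightarrow> ('r \<Rightarrow> 'm list \<Rightarrow> bool) \<Rightarrow> 'v itself \<Rightarrow> 'r \<Rightarrow> bool" where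
  "zero_definable_in_P ar I _ P \<longleftrightarrow>
     (\<forall>(\<phi>::('r,'v,'m) fm) X. wf ar \<phi> \<longrightarrow> pars \<phi> = {} \<longrightarrow> finite X \<longrightarrow> fv \<phi> \<subseteq> X \<longrightarrow>
        (\<exists>\<chi>::('r,'v,'m) fm. wf ar \<chi> \<and> pars \<chi> = {} \<and> fv \<chi> \<subseteq> X \<and>
           (\<forall>e. e ` X \<subseteq> Pset I P \<longrightarrow> (sat UNIV I e \<phi> \<longleftrightarrow> sat (Pset I P) I e \<chi>))))"

definition has_QE :: "('r \<Rightarrow> nat) \<Rightarrow> ('r \<Rightarrow> 'm list \<Rightarrow> bool) \<Rightarrow> 'v itself \<Rightarrow> bool" where
  "has_QE ar I _ \<longleftrightarrow>
     (\<forall>\<phi>::('r,'v,'m) fm. wf ar \<phi> \<longrightarrow> pars \<phi> = {} \<longrightarrow>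
        (\<exists>\<chi>::('r,'v,'m) fm. qfree \<chi> \<and> wf ar \<chi> \<and> pars \<chi> = {} \<and> fv \<chi> \<subseteq> fv \<phi> \<and>
           (\<forall>e. sat UNIV I e \<phi> \<longleftrightarrow> sat UNIV I e \<chi>)))"

definition complete_set :: "('r \<Rightarrow> nat) \<Rightarrow> ('r \<Rightarrow> 'm list \<Rightarrow> bool) \<Rightarrow> 'r \<Rightarrow> 'v itself \<Rightarrow> 'm set \<Rightarrow> bool" where
  "complete_set ar I P _ A \<longleftrightarrow>
     (\<forall>(\<psi>::('r,'v,'m) fm) X. wf ar \<psi> \<longrightarrow> pars \<psi> \<subseteq> A \<longrightarrow> finite X \<longrightarrow> fv \<psi> \<subseteq> X \<longrightarrow>
        (\<exists>e. e ` X \<subseteq> Pset I P \<and> sat UNIV I e \<psi>) \<longrightarrow>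
        (\<exists>e. e ` X \<subseteq> Pset I P \<inter> A \<and> sat UNIV I e \<psi>))"

definition tp :: "('r \<Rightarrow> nat) \<Rightarrow> ('r \<Rightarrow> 'm list \<Rightarrow> bool) \<Rightarrow> 'v set \<Rightarrow> ('v \<Rightarrow> 'm) \<Rightarrow> 'm set \<Rightarrow> ('r,'v,'m) fm set" where
  "tp ar I X c A = {\<phi>. wf ar \<phi> \<and> pars \<phi> \<subseteq> A \<and> fv \<phi> \<subseteq> X \<and> sat UNIV I c \<phi>}"

definition Sstar :: "('r \<Rightarrow> nat) \<Rightarrow> ('r \<Rightarrow> 'm list \<Rightarrow> bool) \<Rightarrow> 'r \<Rightarrow> 'm set \<Rightarrow> 'v set \<Rightarrow> ('r,'v,'m) fm set set" where
  "Sstar ar I P A X = {tp ar I X c A | c.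
      Pset I P \<inter> (A \<union> c ` X) = Pset I P \<inter> A \<and> complete_set ar I P TYPE('v) (A \<union> c ` X)}"

definition partial_type :: "('r \<Rightarrow> nat) \<Rightarrow> ('r \<Rightarrow> 'm list \<Rightarrow> bool) \<Rightarrow> 'm set \<Rightarrow> 'v set \<Rightarrow> ('r,'v,'m) fm set \<Rightarrow> bool" where
  "partial_type ar I A X p \<longleftrightarrow>
     (\<forall>\<phi>\<in>p. wf ar \<phi> \<and> pars \<phi> \<subseteq> A \<and> fv \<phi> \<subseteq> X) \<and>
     (\<forall>F. finite F \<longrightarrow> F \<subseteq> p \<longrightarrow> (\<exists>e. \<forall>\<phi>\<in>F. sat UNIV I e \<phi>))"

end

theory Submission
  imports Defs
begin

(* It suffices to realize p by a tuple c from M: every set B with P^M \<subseteq> B \<subseteq> M is complete,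
   because a formula over M with a solution in P^C has one in P^M by elementarity, and since c
   lies in M, the set A \<union> c has the same P-part as A; hence tp(c/A) belongs to S_*(A).

   If lambda is finite, p and the variables are finite and elementarity alone realizes p in M.
   Otherwise Zorn's lemma gives a maximal assignment G of elements of M to variables that keeps
   p finitely satisfiable.  G has fewer than lambda values, so if G missed a variable x, the
   formulas "some values of the other variables satisfy F[G]" (F \<subseteq> p finite) would form a
   type in x over fewer than lambda parameters, finitely satisfiable in M by elementarity; a
   realization in M would extend G.  So G is total, and it realizes p. *)

unbundle cardinal_syntax

lemma ev_cong: "\<forall>v\<in>tm_vars t. e v = e' v \<Longrightarrow> ev e t = ev e' t"
  by (cases t) auto

lemma sat_cong: "\<forall>v\<in>fv \<phi>. e v = e' v \<Longrightarrow> sat D I e \<phi> = sat D I e' \<phi>"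
proof (induction \<phi> arbitrary: e e')
  case (Eq s t)
  then show ?case using ev_cong[of s e e'] ev_cong[of t e e'] by simp
next
  case (Rel r ts)
  then have "map (ev e) ts = map (ev e') ts" by (auto intro!: ev_cong)
  then show ?case by (simp only: sat.simps)
next
  case (Conj \<phi> \<psi>)
  then show ?case using Conj.IH[of e e'] by (metis UnCI fv.simps(5) sat.simps(5))
next
  case (Ex v \<phi>)
  have "sat D I (e(v := a)) \<phi> = sat D I (e'(v := a)) \<phi>" for a
    using Ex.prems by (intro Ex.IH) auto
  then show ?case by simp
qed simp_all

lemma finite_fv: "finite (fv \<phi>)"
proof -
  have "finite (tm_vars t)" for t :: "('v,'m) tm" by (cases t) auto
  then show ?thesis by (induction \<phi>) auto
qed

lemma finite_pars: "finite (pars \<phi>)"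
proof -
  have "finite (tm_pars t)" for t :: "('v,'m) tm" by (cases t) auto
  then show ?thesis by (induction \<phi>) auto
qed

fun conjs :: "('r,'v,'m) fm list \<Rightarrow> ('r,'v,'m) fm" where
  "conjs [] = TT"
| "conjs (\<phi> # \<phi>s) = Conj \<phi> (conjs \<phi>s)"

fun exs :: "'v list \<Rightarrow> ('r,'v,'m) fm \<Rightarrow> ('r,'v,'m) fm" where
  "exs [] \<phi> = \<phi>"
| "exs (v # vs) \<phi> = Ex v (exs vs \<phi>)"

lemma sat_conjs: "sat D I e (conjs \<phi>s) \<longleftrightarrow> (\<forall>\<phi>\<in>set \<phi>s. sat D I e \<phi>)"
  by (induction \<phi>s) auto

lemma fv_conjs: "fv (conjs \<phi>s) = (\<Union>\<phi>\<in>set \<phi>s. fv \<phi>)"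
  by (induction \<phi>s) auto

lemma pars_conjs: "pars (conjs \<phi>s) = (\<Union>\<phi>\<in>set \<phi>s. pars \<phi>)"
  by (induction \<phi>s) auto

lemma wf_conjs: "wf ar (conjs \<phi>s) \<longleftrightarrow> (\<forall>\<phi>\<in>set \<phi>s. wf ar \<phi>)"
  by (induction \<phi>s) auto

lemma sat_exs:
  "sat D I e (exs vs \<phi>) \<longleftrightarrow>
     (\<exists>e'. (\<forall>v. v \<notin> set vs \<longrightarrow> e' v = e v) \<and> e' ` set vs \<subseteq> D \<and> sat D I e' \<phi>)"
proof (induction vs arbitrary: e)
  case Nil
  then show ?case by (simp add: fun_eq_iff[symmetric])
next
  case (Cons v vs)
  show ?case
  proof
    assume "sat D I e (exs (v # vs) \<phi>)"
    then obtain a e' where a: "a \<in> D" and e': "\<forall>w. w \<notin> set vs \<longrightarrow> e' w = (e(v := a)) w"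
      "e' ` set vs \<subseteq> D" "sat D I e' \<phi>"
      using Cons.IH by auto
    have "e' v \<in> D" using a e' by (cases "v \<in> set vs") auto
    with e' show "\<exists>e'. (\<forall>w. w \<notin> set (v # vs) \<longrightarrow> e' w = e w) \<and> e' ` set (v # vs) \<subseteq> D \<and> sat D I e' \<phi>"
      by (intro exI[of _ e']) auto
  next
    assume "\<exists>e'. (\<forall>w. w \<notin> set (v # vs) \<longrightarrow> e' w = e w) \<and> e' ` set (v # vs) \<subseteq> D \<and> sat D I e' \<phi>"
    then obtain e' where e': "\<forall>w. w \<notin> set (v # vs) \<longrightarrow> e' w = e w" "e' ` set (v # vs) \<subseteq> D"
      "sat D I e' \<phi>"
      by blast
    then have "sat D I (e(v := e' v)) (exs vs \<phi>)"
      unfolding Cons.IH by (intro exI[of _ e']) auto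
    then show "sat D I e (exs (v # vs) \<phi>)" using e'(2) by auto
  qed
qed

lemma fv_exs: "fv (exs vs \<phi>) = fv \<phi> - set vs"
  by (induction vs) auto

lemma pars_exs: "pars (exs vs \<phi>) = pars \<phi>"
  by (induction vs) auto

lemma wf_exs: "wf ar (exs vs \<phi>) \<longleftrightarrow> wf ar \<phi>"
  by (induction vs) auto

definition Conjs :: "('r,'v,'m) fm set \<Rightarrow> ('r,'v,'m) fm" where
  "Conjs F = conjs (SOME \<phi>s. set \<phi>s = F)"

definition Exs :: "'v set \<Rightarrow> ('r,'v,'m) fm \<Rightarrow> ('r,'v,'m) fm" where
  "Exs V \<phi> = exs (SOME vs. set vs = V) \<phi>"

lemma set_some_list: "finite A \<Longrightarrow> set (SOME xs. set xs = A) = A"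
  by (metis (mono_tags) finite_list someI_ex)

lemma
  assumes "finite F"
  shows sat_Conjs: "sat D I e (Conjs F) \<longleftrightarrow> (\<forall>\<phi>\<in>F. sat D I e \<phi>)"
    and fv_Conjs: "fv (Conjs F) = (\<Union>\<phi>\<in>F. fv \<phi>)"
    and pars_Conjs: "pars (Conjs F) = (\<Union>\<phi>\<in>F. pars \<phi>)"
    and wf_Conjs: "wf ar (Conjs F) \<longleftrightarrow> (\<forall>\<phi>\<in>F. wf ar \<phi>)"
  by (simp_all add: Conjs_def set_some_list[OF assms] sat_conjs fv_conjs pars_conjs wf_conjs)

lemma
  assumes "finite V"
  shows sat_Exs: "sat D I e (Exs V \<phi>) \<longleftrightarrow>
      (\<exists>e'. (\<forall>v. v \<notin> V \<longrightarrow> e' v = e v) \<and> e' ` V \<subseteq> D \<and> sat D I e' \<phi>)"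
    and fv_Exs: "fv (Exs V \<phi>) = fv \<phi> - V"
  by (simp_all add: Exs_def set_some_list[OF assms] sat_exs fv_exs)

lemma pars_Exs: "pars (Exs V \<phi>) = pars \<phi>"
  by (simp add: Exs_def pars_exs)

lemma wf_Exs: "wf ar (Exs V \<phi>) \<longleftrightarrow> wf ar \<phi>"
  by (simp add: Exs_def wf_exs)

lemma elem_sub_sat_iff:
  fixes \<phi> :: "('r,'v,'m) fm"
  assumes "elem_sub ar I TYPE('v) M" "wf ar \<phi>" "pars \<phi> \<subseteq> M" "e ` fv \<phi> \<subseteq> M"
  shows "sat M I e \<phi> \<longleftrightarrow> sat UNIV I e \<phi>"
  using assms unfolding elem_sub_def by blast

lemma elem_sub_realizes:
  fixes \<phi> :: "('r,'v,'m) fm"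
  assumes M: "elem_sub ar I TYPE('v) M" and \<phi>: "wf ar \<phi>" "pars \<phi> \<subseteq> M"
    and V: "finite V" "fv \<phi> \<subseteq> V" and e: "sat UNIV I e \<phi>"
  obtains e' where "e' ` V \<subseteq> M" "sat UNIV I e' \<phi>"
proof -
  have "sat UNIV I e (Exs V \<phi>)"
    using e V(1) by (auto simp: sat_Exs)
  moreover have "wf ar (Exs V \<phi>)" "pars (Exs V \<phi>) \<subseteq> M" "fv (Exs V \<phi>) = {}"
    using \<phi> V by (auto simp: wf_Exs pars_Exs fv_Exs)
  ultimately have "sat M I e (Exs V \<phi>)"
    using elem_sub_sat_iff[OF M] by (metis empty_subsetI image_empty)
  then obtain e' where e': "e' ` V \<subseteq> M" "sat M I e' \<phi>"
    using V(1) by (auto simp: sat_Exs)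
  have "sat UNIV I e' \<phi>"
    using elem_sub_sat_iff[OF M \<phi>] e' V(2) by blast
  with e'(1) show thesis by (rule that)
qed

lemma elem_sub_complete_set:
  fixes ar :: "'r \<Rightarrow> nat" and I :: "'r \<Rightarrow> 'm list \<Rightarrow> bool" and P :: 'r
  assumes M: "elem_sub ar I TYPE('v) M" and P_unary: "ar P = 1"
    and B: "Pset I P \<inter> M \<subseteq> B" "B \<subseteq> M"
  shows "complete_set ar I P TYPE('v) B"
  unfolding complete_set_def
proof (intro allI impI)
  fix \<psi> :: "('r,'v,'m) fm" and X
  assume \<psi>: "wf ar \<psi>" "pars \<psi> \<subseteq> B" and X: "finite X" "fv \<psi> \<subseteq> X"
    and "\<exists>e. e ` X \<subseteq> Pset I P \<and> sat UNIV I e \<psi>"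
  then obtain e where e: "e ` X \<subseteq> Pset I P" "sat UNIV I e \<psi>" by blast
  define \<phi> where "\<phi> = Conj (Conjs ((\<lambda>v. Rel P [Var v]) ` X)) \<psi>"
  have "wf ar \<phi>" "pars \<phi> \<subseteq> M" "fv \<phi> \<subseteq> X" "sat UNIV I e \<phi>"
    using \<psi> X e B P_unary
    by (auto simp: \<phi>_def wf_Conjs pars_Conjs fv_Conjs sat_Conjs Pset_def)
  then obtain e' where e': "e' ` X \<subseteq> M" "sat UNIV I e' \<phi>"
    using elem_sub_realizes[OF M _ _ X(1)] by metis
  then have "e' ` X \<subseteq> Pset I P \<inter> B" "sat UNIV I e' \<psi>"
    using X(1) B by (auto simp: \<phi>_def sat_Conjs Pset_def)
  then show "\<exists>e. e ` X \<subseteq> Pset I P \<inter> B \<and> sat UNIV I e \<psi>" by blast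
qed

definition finitely_satisfiable :: "('r \<Rightarrow> 'm list \<Rightarrow> bool) \<Rightarrow> ('r,'v,'m) fm set \<Rightarrow> bool" where
  "finitely_satisfiable I q \<longleftrightarrow> (\<forall>F. finite F \<longrightarrow> F \<subseteq> q \<longrightarrow> (\<exists>e. \<forall>\<phi>\<in>F. sat UNIV I e \<phi>))"

lemma partial_type_iff:
  "partial_type ar I A X p \<longleftrightarrow>
     (\<forall>\<phi>\<in>p. wf ar \<phi> \<and> pars \<phi> \<subseteq> A \<and> fv \<phi> \<subseteq> X) \<and> finitely_satisfiable I p"
  by (simp add: partial_type_def finitely_satisfiable_def)

lemma finitely_satisfiable_subset:
  "finitely_satisfiable I q \<Longrightarrow> q' \<subseteq> q \<Longrightarrow> finitely_satisfiable I q'"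
  unfolding finitely_satisfiable_def by blast

lemma finitely_satisfiable_Union_chain:
  assumes "\<C> \<noteq> {}" "subset.chain \<A> \<C>" "\<And>q. q \<in> \<C> \<Longrightarrow> finitely_satisfiable I q"
  shows "finitely_satisfiable I (\<Union>\<C>)"
  unfolding finitely_satisfiable_def
proof (intro allI impI)
  fix F assume F: "finite F" "F \<subseteq> \<Union>\<C>"
  obtain q where "q \<in> \<C>" "F \<subseteq> q"
    using finite_subset_Union_chain[OF F assms(1,2)] .
  with F(1) show "\<exists>e. \<forall>\<phi>\<in>F. sat UNIV I e \<phi>"
    using assms(3) unfolding finitely_satisfiable_def by blast
qed

lemma elem_sub_realizes_finite_type:
  fixes p :: "('r,'v,'m) fm set"
  assumes M: "elem_sub ar I TYPE('v) M"
    and p: "\<forall>\<phi>\<in>p. wf ar \<phi> \<and> pars \<phi> \<subseteq> M \<and> fv \<phi> \<subseteq> X" "finitely_satisfiable I p"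
    and fin: "finite p" "finite X"
  obtains c where "c ` X \<subseteq> M" "\<forall>\<phi>\<in>p. sat UNIV I c \<phi>"
proof -
  obtain e where "\<forall>\<phi>\<in>p. sat UNIV I e \<phi>"
    using p(2) fin(1) unfolding finitely_satisfiable_def by blast
  then have "wf ar (Conjs p)" "pars (Conjs p) \<subseteq> M" "fv (Conjs p) \<subseteq> X" "sat UNIV I e (Conjs p)"
    using p(1) fin(1) by (auto simp: wf_Conjs pars_Conjs fv_Conjs sat_Conjs)
  then obtain c where "c ` X \<subseteq> M" "sat UNIV I c (Conjs p)"
    using elem_sub_realizes[OF M _ _ fin(2)] by metis
  then show thesis using that fin(1) by (simp add: sat_Conjs)
qed

lemma ordLess_finite_Field_imp_finite:
  assumes "Card_order r" "finite (Field r)" "|A| <o r"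
  shows "finite A"
proof -
  have "|A| <o |Field r|"
    using assms(3) ordIso_symmetric[OF card_of_Field_ordIso[OF assms(1)]] by (rule ordLess_ordIso_trans)
  then have "|A| \<le>o |Field r|" by (rule ordLess_imp_ordLeq)
  then show ?thesis using assms(2) by (rule card_of_ordLeq_finite)
qed

lemma card_of_UNION_finite_ordLess_infinite_Field:
  assumes r: "Card_order r" "\<not> finite (Field r)" and I: "|I| <o r"
    and fin: "\<And>i. i \<in> I \<Longrightarrow> finite (A i)"
  shows "|\<Union>i\<in>I. A i| <o r"
proof (cases "finite I")
  case True
  then have "finite (\<Union>i\<in>I. A i)" using fin by blast
  then have "|\<Union>i\<in>I. A i| <o |Field r|"
    using r(2) finite_ordLess_infinite[OF card_of_Well_order card_of_Well_order] by (simp add: Field_card_of)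
  then show ?thesis using r(1) card_of_Field_ordIso ordLess_ordIso_trans by blast
next
  case False
  have "|A i| \<le>o |I|" if "i \<in> I" for i
  proof -
    have "|A i| <o |I|"
      using fin[OF that] False finite_ordLess_infinite[OF card_of_Well_order card_of_Well_order]
      by (simp add: Field_card_of)
    then show ?thesis by (rule ordLess_imp_ordLeq)
  qed
  then have "|\<Union>i\<in>I. A i| \<le>o |I|"
    using card_of_UNION_ordLeq_infinite[OF False] ordLeq_refl[OF card_of_Card_order] by blast
  then show ?thesis using I by (rule ordLeq_ordLess_trans)
qed

definition proj_conj :: "'v \<Rightarrow> ('r,'v,'m) fm set \<Rightarrow> ('r,'v,'m) fm" where
  "proj_conj x F = Exs (\<Union>(fv ` F) - {x}) (Conjs F)"

lemma sat_proj_conj: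
  assumes F: "finite F"
  shows "sat UNIV I (\<lambda>_. a) (proj_conj x F) \<longleftrightarrow> (\<exists>e. e x = a \<and> (\<forall>\<phi>\<in>F. sat UNIV I e \<phi>))"
proof
  assume "sat UNIV I (\<lambda>_. a) (proj_conj x F)"
  then obtain e where "\<forall>v. v \<notin> \<Union>(fv ` F) - {x} \<longrightarrow> e v = a" "sat UNIV I e (Conjs F)"
    using F by (auto simp: proj_conj_def sat_Exs finite_fv)
  then show "\<exists>e. e x = a \<and> (\<forall>\<phi>\<in>F. sat UNIV I e \<phi>)"
    using F by (auto simp: sat_Conjs)
next
  assume "\<exists>e. e x = a \<and> (\<forall>\<phi>\<in>F. sat UNIV I e \<phi>)"
  then obtain e where e: "e x = a" "\<forall>\<phi>\<in>F. sat UNIV I e \<phi>" by blast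
  define e' where "e' v = (if v \<in> \<Union>(fv ` F) - {x} then e v else a)" for v
  have "sat UNIV I e' \<phi>" if "\<phi> \<in> F" for \<phi>
  proof -
    have "\<forall>v\<in>fv \<phi>. e' v = e v" using e(1) that by (auto simp: e'_def)
    then show ?thesis using e(2) that sat_cong[of \<phi> e' e] by blast
  qed
  then show "sat UNIV I (\<lambda>_. a) (proj_conj x F)"
    using F by (auto simp: proj_conj_def sat_Exs finite_fv sat_Conjs e'_def intro!: exI[of _ e'])
qed

lemma
  assumes "finite F"
  shows fv_proj_conj: "fv (proj_conj x F) \<subseteq> {x}"
    and pars_proj_conj: "pars (proj_conj x F) = (\<Union>\<phi>\<in>F. pars \<phi>)"
    and wf_proj_conj: "wf ar (proj_conj x F) \<longleftrightarrow> (\<forall>\<phi>\<in>F. wf ar \<phi>)"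
  using assms
  by (auto simp: proj_conj_def fv_Exs pars_Exs wf_Exs fv_Conjs pars_Conjs wf_Conjs finite_fv)

lemma elem_sub_realizes_proj_conjs:
  fixes q :: "('r,'v,'m) fm set"
  assumes M: "elem_sub ar I TYPE('v) M"
    and q: "\<forall>\<phi>\<in>q. wf ar \<phi> \<and> pars \<phi> \<subseteq> M" "finitely_satisfiable I q"
    and \<F>: "finite \<F>" "\<And>F. F \<in> \<F> \<Longrightarrow> finite F \<and> F \<subseteq> q"
  obtains a where "a \<in> M" "\<And>F. F \<in> \<F> \<Longrightarrow> sat UNIV I (\<lambda>_. a) (proj_conj x F)"
proof -
  have F: "finite (\<Union>\<F>)" "\<Union>\<F> \<subseteq> q" using \<F> by auto
  then obtain e where "\<forall>\<phi>\<in>\<Union>\<F>. sat UNIV I e \<phi>"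
    using q(2) unfolding finitely_satisfiable_def by blast
  then have "sat UNIV I (\<lambda>_. e x) (proj_conj x (\<Union>\<F>))"
    using sat_proj_conj[OF F(1)] by blast
  moreover have "wf ar (proj_conj x (\<Union>\<F>))" "pars (proj_conj x (\<Union>\<F>)) \<subseteq> M"
    using F q(1) by (auto simp: wf_proj_conj pars_proj_conj)
  ultimately obtain e' where e': "e' ` {x} \<subseteq> M" "sat UNIV I e' (proj_conj x (\<Union>\<F>))"
    using elem_sub_realizes[OF M, of "proj_conj x (\<Union>\<F>)" "{x}"] fv_proj_conj[OF F(1)] by blast
  then have "sat UNIV I (\<lambda>_. e' x) (proj_conj x (\<Union>\<F>))"
    using sat_cong[of "proj_conj x (\<Union>\<F>)" e' "\<lambda>_. e' x"] fv_proj_conj[OF F(1)] by auto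
  then obtain e'' where e'': "e'' x = e' x" "\<forall>\<phi>\<in>\<Union>\<F>. sat UNIV I e'' \<phi>"
    using sat_proj_conj[OF F(1)] by blast
  have "sat UNIV I (\<lambda>_. e' x) (proj_conj x F)" if "F \<in> \<F>" for F
    unfolding sat_proj_conj[OF \<F>(2)[OF that, THEN conjunct1]] using e'' that by blast
  with e'(1) show thesis using that by blast
qed

lemma saturated_extends_by_variable:
  fixes q :: "('r,'v,'m) fm set"
  assumes M: "elem_sub ar I TYPE('v) M" and M_sat: "saturated ar I TYPE('v) lam M"
    and q: "\<forall>\<phi>\<in>q. wf ar \<phi> \<and> pars \<phi> \<subseteq> B" "finitely_satisfiable I q"
    and B: "B \<subseteq> M" "|B| <o lam"
  obtains a where "a \<in> M" "finitely_satisfiable I (insert (Eq (Var x) (Par a)) q)"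
proof -
  let ?\<Theta> = "proj_conj x ` {F. finite F \<and> F \<subseteq> q}"
  have \<Theta>: "wf ar (proj_conj x F) \<and> pars (proj_conj x F) \<subseteq> B \<and> fv (proj_conj x F) \<subseteq> {x}"
    if "finite F" "F \<subseteq> q" for F
    using that q(1) fv_proj_conj[OF that(1)] by (auto simp: wf_proj_conj pars_proj_conj)
  have \<Theta>_in_M: "sat M I (\<lambda>_. a) (proj_conj x F) \<longleftrightarrow> sat UNIV I (\<lambda>_. a) (proj_conj x F)"
    if "a \<in> M" "finite F" "F \<subseteq> q" for a F
  proof (rule elem_sub_sat_iff[OF M])
    show "wf ar (proj_conj x F)" "pars (proj_conj x F) \<subseteq> M" "(\<lambda>_. a) ` fv (proj_conj x F) \<subseteq> M"
      using \<Theta>[OF that(2,3)] B(1) that(1) by auto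
  qed
  have "\<exists>a\<in>M. \<forall>\<psi>\<in>?\<Theta>. sat M I (\<lambda>_. a) \<psi>"
  proof (rule M_sat[unfolded saturated_def, rule_format, OF B])
    show "wf ar \<psi> \<and> pars \<psi> \<subseteq> B \<and> fv \<psi> \<subseteq> {x}" if "\<psi> \<in> ?\<Theta>" for \<psi>
      using that \<Theta> by auto
  next
    fix \<Psi> assume "finite \<Psi>" "\<Psi> \<subseteq> ?\<Theta>"
    then obtain \<F> where \<F>: "\<F> \<subseteq> {F. finite F \<and> F \<subseteq> q}" "finite \<F>" "\<Psi> = proj_conj x ` \<F>"
      by (meson finite_subset_image)
    have "\<forall>\<phi>\<in>q. wf ar \<phi> \<and> pars \<phi> \<subseteq> M" using q(1) B(1) by blast
    then obtain a where a: "a \<in> M" "\<And>F. F \<in> \<F> \<Longrightarrow> sat UNIV I (\<lambda>_. a) (proj_conj x F)"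
      using elem_sub_realizes_proj_conjs[OF M _ q(2) \<F>(2)] \<F>(1) by blast
    have "sat M I (\<lambda>_. a) (proj_conj x F)" if "F \<in> \<F>" for F
      using \<Theta>_in_M[OF a(1)] \<F>(1) a(2) that by blast
    then show "\<exists>a\<in>M. \<forall>\<psi>\<in>\<Psi>. sat M I (\<lambda>_. a) \<psi>"
      using a(1) \<F>(3) by blast
  qed
  then obtain a where a: "a \<in> M" "\<forall>\<psi>\<in>?\<Theta>. sat M I (\<lambda>_. a) \<psi>"
    by blast
  have a_sat: "sat UNIV I (\<lambda>_. a) (proj_conj x F)" if "finite F" "F \<subseteq> q" for F
    using a(2) \<Theta>_in_M[OF a(1) that] that by blast
  have "finitely_satisfiable I (insert (Eq (Var x) (Par a)) q)"
    unfolding finitely_satisfiable_def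
  proof (intro allI impI)
    fix F assume "finite F" "F \<subseteq> insert (Eq (Var x) (Par a)) q"
    then have F: "finite (F - {Eq (Var x) (Par a)})" "F - {Eq (Var x) (Par a)} \<subseteq> q" by auto
    then obtain e where e: "e x = a" "\<forall>\<phi>\<in>F - {Eq (Var x) (Par a)}. sat UNIV I e \<phi>"
      using a_sat[OF F] sat_proj_conj[OF F(1)] by blast
    then have "sat UNIV I e (Eq (Var x) (Par a))" by simp
    then show "\<exists>e. \<forall>\<phi>\<in>F. sat UNIV I e \<phi>" using e(2) by blast
  qed
  with a(1) show thesis by (rule that)
qed

(* Partial assignments are plain relations G \<subseteq> X \<times> M; finite satisfiability of
   p \<union> eq_fms G forces them to be single-valued. *)
definition eq_fms :: "('v \<times> 'm) set \<Rightarrow> ('r,'v,'m) fm set" where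
  "eq_fms G = (\<lambda>(v, a). Eq (Var v) (Par a)) ` G"

lemma finitely_satisfiable_eq_fms_single_valued:
  fixes I :: "'r \<Rightarrow> 'm list \<Rightarrow> bool" and G :: "('v \<times> 'm) set"
  assumes "finitely_satisfiable I (eq_fms G :: ('r,'v,'m) fm set)"
  shows "single_valued G"
  unfolding single_valued_def
proof (intro allI impI)
  fix v a b assume "(v, a) \<in> G" "(v, b) \<in> G"
  then have "{Eq (Var v) (Par a), Eq (Var v) (Par b)} \<subseteq> (eq_fms G :: ('r,'v,'m) fm set)"
    by (auto simp: eq_fms_def)
  then obtain e where "sat UNIV I e (Eq (Var v) (Par a))" "sat UNIV I e (Eq (Var v) (Par b))"
    using assms unfolding finitely_satisfiable_def by (metis finite.emptyI finite.insertI insertCI)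
  then show "a = b" by simp
qed

lemma maximal_consistent_assignment:
  fixes p :: "('r,'v,'m) fm set"
  assumes "finitely_satisfiable I p"
  obtains G where "G \<subseteq> X \<times> M" "finitely_satisfiable I (p \<union> eq_fms G)"
    "\<And>H. H \<subseteq> X \<times> M \<Longrightarrow> G \<subseteq> H \<Longrightarrow> finitely_satisfiable I (p \<union> eq_fms H) \<Longrightarrow> H = G"
proof -
  let ?\<A> = "{G. G \<subseteq> X \<times> M \<and> finitely_satisfiable I (p \<union> eq_fms G)}"
  have "\<Union>\<C> \<in> ?\<A>" if "\<C> \<in> chains ?\<A>" for \<C>
  proof (cases "\<C> = {}")
    case True
    then show ?thesis using assms by (simp add: eq_fms_def)
  next
    case False
    have \<C>: "subset.chain ?\<A> \<C>" using that by (simp add: chains_alt_def)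
    let ?\<Q> = "(\<lambda>G. p \<union> eq_fms G) ` \<C>"
    have "subset.chain UNIV ?\<Q>"
      unfolding subset_chain_def
    proof (intro conjI ballI)
      fix q q' assume "q \<in> ?\<Q>" "q' \<in> ?\<Q>"
      then obtain G H where "G \<in> \<C>" "H \<in> \<C>" "q = p \<union> eq_fms G" "q' = p \<union> eq_fms H"
        by blast
      moreover have "G \<subseteq> H \<or> H \<subseteq> G"
        using \<C> \<open>G \<in> \<C>\<close> \<open>H \<in> \<C>\<close> unfolding subset_chain_def by blast
      ultimately show "q \<subseteq> q' \<or> q' \<subseteq> q"
        unfolding eq_fms_def by blast
    qed simp
    moreover have "finitely_satisfiable I q" if "q \<in> ?\<Q>" for q
      using that \<C> unfolding subset_chain_def by blast
    ultimately have "finitely_satisfiable I (\<Union>?\<Q>)"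
      using False by (intro finitely_satisfiable_Union_chain[where \<A> = UNIV]) simp_all
    moreover have "\<Union>?\<Q> = p \<union> eq_fms (\<Union>\<C>)"
      using False by (auto simp: eq_fms_def)
    moreover have "\<Union>\<C> \<subseteq> X \<times> M"
      using \<C> unfolding subset_chain_def by blast
    ultimately show ?thesis by simp
  qed
  then have "\<forall>\<C>\<in>chains ?\<A>. \<Union>\<C> \<in> ?\<A>" by blast
  then obtain G where G: "G \<in> ?\<A>" and G_max: "\<forall>H\<in>?\<A>. G \<subseteq> H \<longrightarrow> H = G"
    by (rule Zorn_Lemma[THEN bexE])
  show thesis
  proof (rule that)
    show "G \<subseteq> X \<times> M" "finitely_satisfiable I (p \<union> eq_fms G)" using G by simp_all
    show "H = G" if "H \<subseteq> X \<times> M" "G \<subseteq> H" "finitely_satisfiable I (p \<union> eq_fms H)" for H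
      using G_max that by simp
  qed
qed


lemma single_valued_card_of_snd_ordLeq:
  assumes "single_valued G" "fst ` G \<subseteq> X"
  shows "|snd ` G| \<le>o |X|"
proof -
  have "snd ` G \<subseteq> (\<lambda>v. SOME a. (v, a) \<in> G) ` X"
  proof
    fix b assume "b \<in> snd ` G"
    then obtain v where vb: "(v, b) \<in> G" by force
    then have "(SOME a. (v, a) \<in> G) = b"
      using assms(1) by (auto simp: single_valued_def)
    moreover have "v \<in> X" using vb assms(2) by force
    ultimately show "b \<in> (\<lambda>v. SOME a. (v, a) \<in> G) ` X" by blast
  qed
  then show ?thesis
    using ordLeq_transitive[OF card_of_mono1 card_of_image] by blast
qed

lemma total_assignment_realizes:
  fixes p :: "('r,'v,'m) fm set"
  assumes G: "G \<subseteq> X \<times> M" "\<And>x. x \<in> X \<Longrightarrow> \<exists>a. (x, a) \<in> G"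
    and p: "\<forall>\<phi>\<in>p. fv \<phi> \<subseteq> X" "finitely_satisfiable I (p \<union> eq_fms G)"
  obtains c where "c ` X \<subseteq> M" "\<forall>\<phi>\<in>p. sat UNIV I c \<phi>"
proof -
  define c where "c v = (SOME a. (v, a) \<in> G)" for v
  have c: "(v, c v) \<in> G" if "v \<in> X" for v
    unfolding c_def using G(2)[OF that] by (rule someI_ex)
  have "sat UNIV I c \<phi>" if "\<phi> \<in> p" for \<phi>
  proof -
    let ?F = "insert \<phi> ((\<lambda>v. Eq (Var v) (Par (c v))) ` fv \<phi>)"
    have "finite ?F" by (simp add: finite_fv)
    moreover have "?F \<subseteq> p \<union> eq_fms G"
      using that c p(1) by (force simp: eq_fms_def)
    ultimately obtain e where e: "\<forall>\<psi>\<in>?F. sat UNIV I e \<psi>"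
      using p(2) unfolding finitely_satisfiable_def by blast
    then have "\<forall>v\<in>fv \<phi>. e v = c v" by simp
    then show ?thesis using e sat_cong[of \<phi> e c] by simp
  qed
  moreover have "c ` X \<subseteq> M" using c G(1) by blast
  ultimately show thesis using that by blast
qed

lemma saturated_realizes_small_type:
  fixes p :: "('r,'v,'m) fm set" and lam :: "'l rel"
  assumes M: "elem_sub ar I TYPE('v) M" and M_sat: "saturated ar I TYPE('v) lam M"
    and lam: "Card_order lam" "\<not> finite (Field lam)"
    and p: "\<forall>\<phi>\<in>p. wf ar \<phi> \<and> pars \<phi> \<subseteq> M \<and> fv \<phi> \<subseteq> X" "finitely_satisfiable I p" "|p| <o lam"
    and X: "|X| <o lam"
  obtains c where "c ` X \<subseteq> M" "\<forall>\<phi>\<in>p. sat UNIV I c \<phi>"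
proof -
  obtain G where G: "G \<subseteq> X \<times> M" "finitely_satisfiable I (p \<union> eq_fms G)"
    and G_max: "\<And>H. H \<subseteq> X \<times> M \<Longrightarrow> G \<subseteq> H \<Longrightarrow> finitely_satisfiable I (p \<union> eq_fms H) \<Longrightarrow> H = G"
    using maximal_consistent_assignment[OF p(2)] by blast
  have G_total: "\<exists>a. (x, a) \<in> G" if "x \<in> X" for x
  proof (rule ccontr)
    assume x_new: "\<nexists>a. (x, a) \<in> G"
    define B where "B = (\<Union>\<phi>\<in>p. pars \<phi>) \<union> snd ` G"
    have "single_valued G"
      using G(2) finitely_satisfiable_subset finitely_satisfiable_eq_fms_single_valued by blast
    then have "|snd ` G| \<le>o |X|"
      using G(1) by (intro single_valued_card_of_snd_ordLeq) auto
    then have "|snd ` G| <o lam" using X by (rule ordLeq_ordLess_trans)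
    with card_of_UNION_finite_ordLess_infinite_Field[OF lam p(3) finite_pars]
    have "|B| <o lam"
      unfolding B_def by (rule card_of_Un_ordLess_infinite_Field[OF lam(2,1)])
    moreover have "B \<subseteq> M" using p(1) G(1) by (auto simp: B_def)
    moreover have "\<forall>\<phi>\<in>p \<union> eq_fms G. wf ar \<phi> \<and> pars \<phi> \<subseteq> B"
      using p(1) by (force simp: B_def eq_fms_def)
    ultimately obtain a where "a \<in> M"
      and "finitely_satisfiable I (insert (Eq (Var x) (Par a)) (p \<union> eq_fms G))"
      using saturated_extends_by_variable[OF M M_sat _ G(2)] by blast
    moreover have "insert (Eq (Var x) (Par a)) (p \<union> eq_fms G) = p \<union> eq_fms (insert (x, a) G)"
      by (auto simp: eq_fms_def)
    ultimately have "insert (x, a) G = G"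
      using G(1) \<open>x \<in> X\<close> by (intro G_max) auto
    then show False using x_new by blast
  qed
  have p_fv: "\<forall>\<phi>\<in>p. fv \<phi> \<subseteq> X" using p(1) by blast
  show thesis
    using total_assignment_realizes[OF G(1) G_total p_fv G(2)] that by blast
qed

lemma saturated_realizes_type:
  fixes p :: "('r,'v,'m) fm set" and lam :: "'l rel"
  assumes M: "elem_sub ar I TYPE('v) M" and M_sat: "saturated ar I TYPE('v) lam M"
    and lam: "Card_order lam" and p: "partial_type ar I A X p" "A \<subseteq> M"
    and small: "|p| <o lam" "|X| <o lam"
  obtains c where "c ` X \<subseteq> M" "\<forall>\<phi>\<in>p. sat UNIV I c \<phi>"
proof -
  have p_M: "\<forall>\<phi>\<in>p. wf ar \<phi> \<and> pars \<phi> \<subseteq> M \<and> fv \<phi> \<subseteq> X" and p_sat: "finitely_satisfiable I p"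
    using p by (auto simp: partial_type_iff)
  show thesis
  proof (cases "finite (Field lam)")
    case True
    then have "finite p" "finite X"
      using lam small ordLess_finite_Field_imp_finite by blast+
    then show thesis using elem_sub_realizes_finite_type[OF M p_M p_sat] that by blast
  next
    case False
    then show thesis using saturated_realizes_small_type[OF M M_sat lam False p_M p_sat small] that by blast
  qed
qed

theorem mainTheorem4:
  fixes ar :: "'r \<Rightarrow> nat" and I :: "'r \<Rightarrow> 'm list \<Rightarrow> bool" and P :: 'r
    and kap :: "'k rel" and lam :: "'l rel"
    and M A :: "'m set" and X :: "'v set" and p :: "('r,'v,'m) fm set"
  assumes vars: "\<not> finite (UNIV :: 'v set)"
    and P_unary: "ar P = 1"
    and C_monster: "monster ar I TYPE('v) kap"
    and stab: "stably_embedded ar I TYPE('v) P"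
    and zdef: "zero_definable_in_P ar I TYPE('v) P"
    and QE: "has_QE ar I TYPE('v)"
    and lam: "Card_order lam"
    and M_elem: "elem_sub ar I TYPE('v) M"
    and M_small: "(card_of M, kap) \<in> ordLess"
    and M_sat: "saturated ar I TYPE('v) lam M"
    and PM_A: "Pset I P \<inter> M \<subseteq> A" and A_M: "A \<subseteq> M"
    and p_type: "partial_type ar I A X p"
    and p_small: "(card_of p, lam) \<in> ordLess"
    and X_small: "(card_of X, lam) \<in> ordLess"
  shows "\<exists>q \<in> Sstar ar I P A X. p \<subseteq> q"
proof -
  obtain c where c: "c ` X \<subseteq> M" "\<forall>\<phi>\<in>p. sat UNIV I c \<phi>"
    using saturated_realizes_type[OF M_elem M_sat lam p_type A_M p_small X_small] .
  have "Pset I P \<inter> (A \<union> c ` X) = Pset I P \<inter> A"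
    using c(1) PM_A by blast
  moreover have "complete_set ar I P TYPE('v) (A \<union> c ` X)"
    by (rule elem_sub_complete_set[OF M_elem P_unary]) (use PM_A A_M c(1) in blast)+
  ultimately have "tp ar I X c A \<in> Sstar ar I P A X"
    unfolding Sstar_def by (intro CollectI exI[of _ c]) simp
  moreover have "p \<subseteq> tp ar I X c A"
    using p_type c(2) by (auto simp: tp_def partial_type_def)
  ultimately show ?thesis by blast
qed

end
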